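(* Let $n\ge 2$, $0<p<q$ be real numbers and let $A$ be the $n\times n$ matrix with columns $a_k=q e_k-p e_{k+1}$ ($1\le k\le n-1$) and $a_n=q e_n+p e_1$. Let $S=(s_{i,j})_{i,j=1}^n$ be a signed permutation matrix, i.e. $S\in\{0,\pm1\}^{n\times n}$ and every row and every column of $S$ contains exactly one nonzero entry. Then $S(A\mathbb{Z}^n)=A\mathbb{Z}^n$ if and only if all of the following hold: $s_{i,j}=s_{i+1,j+1}$ for all $i,j<n$; $s_{i,n}=-s_{i+1,1}$ and $s_{n,j}=-s_{1,j+1}$ for all $i,j<n$; and $s_{n,n}=s_{1,1}$.
   Context: $e_i$ denotes the $i$-th standard unit vector of $\mathbb{R}^n$. *)

theory Defs
  imports Complex_Main
begin

text \<open>Vectors in R^n and n x n matrices are represented with explicit index range {1..n}: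
  vectors as nat => real, matrices as nat => nat => real (entry (i,j) = M i j).
  Only entries with indices in {1..n} are relevant.\<close>

definition mat_vec :: "nat \<Rightarrow> (nat \<Rightarrow> nat \<Rightarrow> real) \<Rightarrow> (nat \<Rightarrow> real) \<Rightarrow> (nat \<Rightarrow> real)" where
  "mat_vec n M x = (\<lambda>i. if i \<in> {1..n} then (\<Sum>j=1..n. M i j * x j) else 0)"

definition lattice :: "nat \<Rightarrow> (nat \<Rightarrow> nat \<Rightarrow> real) \<Rightarrow> (nat \<Rightarrow> real) set" where
  "lattice n M = {mat_vec n M z | z. \<forall>j\<in>{1..n}. z j \<in> \<int>}"

definition matA :: "nat \<Rightarrow> real \<Rightarrow> real \<Rightarrow> nat \<Rightarrow> nat \<Rightarrow> real" where
  "matA n p q i k =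
     (if k < n then (if i = k then q else if i = k + 1 then - p else 0)
      else (if i = n then q else if i = 1 then p else 0))"

definition signed_perm_matrix :: "nat \<Rightarrow> (nat \<Rightarrow> nat \<Rightarrow> real) \<Rightarrow> bool" where
  "signed_perm_matrix n S \<longleftrightarrow>
     (\<forall>i\<in>{1..n}. \<forall>j\<in>{1..n}. S i j \<in> {-1, 0, 1}) \<and>
     (\<forall>i\<in>{1..n}. \<exists>!j. j \<in> {1..n} \<and> S i j \<noteq> 0) \<and>
     (\<forall>j\<in>{1..n}. \<exists>!i. i \<in> {1..n} \<and> S i j \<noteq> 0)"

end

theory Submission
  imports Defs
begin

text \<open>Let T be the twisted cyclic shift, T e_k = e_(k+1) for k < n and T e_n = -e_1. Then
  A = q I - p T, and the conditions on S say precisely that S commutes with T. If it does,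
  S commutes with A and, being unimodular, maps A Z^n onto itself. Conversely, if S A Z^n = A Z^n,
  then for every column k the lattice vector S A e_k = q S e_k - p S T e_k has the form
  q u - p v with signed unit vectors u, v. One coordinate of A^(-1) (q u - p v)
  equals (+-q^t p^(n-t) +- p^n) / (q^n + p^n) with 1 <= t <= n, and since p < q this is an integer
  only if t = n and the signs agree, which says v = T u, i.e. S T e_k = T S e_k.\<close>

definition mat_mult :: "nat \<Rightarrow> (nat \<Rightarrow> nat \<Rightarrow> real) \<Rightarrow> (nat \<Rightarrow> nat \<Rightarrow> real) \<Rightarrow> nat \<Rightarrow> nat \<Rightarrow> real" where
  "mat_mult n M N i k = (\<Sum>j=1..n. M i j * N j k)"

lemma sum_single_nonzero:
  fixes f :: "nat \<Rightarrow> real"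
  assumes "g \<in> {1..n}" and "\<And>j. j \<in> {1..n} \<Longrightarrow> j \<noteq> g \<Longrightarrow> f j = 0"
  shows "(\<Sum>j=1..n. f j) = f g"
  using assms by (subst sum.mono_neutral_right[of "{1..n}" "{g}"]) auto

lemma mat_vec_apply: "i \<in> {1..n} \<Longrightarrow> mat_vec n M x i = (\<Sum>j=1..n. M i j * x j)"
  by (simp add: mat_vec_def)

lemma mat_vec_mat_mult: "mat_vec n M (mat_vec n N x) = mat_vec n (mat_mult n M N) x"
proof
  fix i
  show "mat_vec n M (mat_vec n N x) i = mat_vec n (mat_mult n M N) x i"
  proof (cases "i \<in> {1..n}")
    case True
    have "(\<Sum>j=1..n. M i j * mat_vec n N x j) = (\<Sum>j=1..n. \<Sum>k=1..n. M i j * N j k * x k)"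
      by (intro sum.cong) (auto simp: mat_vec_apply sum_distrib_left mult.assoc)
    also have "\<dots> = (\<Sum>k=1..n. mat_mult n M N i k * x k)"
      by (subst sum.swap) (simp add: mat_mult_def sum_distrib_right)
    finally show ?thesis
      using True by (simp add: mat_vec_apply)
  qed (auto simp: mat_vec_def)
qed

lemma mat_vec_cong:
  assumes "\<And>i j. i \<in> {1..n} \<Longrightarrow> j \<in> {1..n} \<Longrightarrow> M i j = N i j"
    and "\<And>j. j \<in> {1..n} \<Longrightarrow> x j = y j"
  shows "mat_vec n M x = mat_vec n N y"
  unfolding mat_vec_def using assms by (auto intro!: sum.cong)

lemma mat_vec_unit:
  "i \<in> {1..n} \<Longrightarrow> k \<in> {1..n} \<Longrightarrow> mat_vec n M (\<lambda>j. if j = k then 1 else 0) i = M i k"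
  by (simp add: mat_vec_def if_distrib cong: if_cong)

lemma mat_vec_identity:
  assumes "\<And>j. j \<in> {1..n} \<Longrightarrow> M i j = (if i = j then 1 else 0)" and "i \<in> {1..n}"
  shows "mat_vec n M x i = x i"
  unfolding mat_vec_apply[OF assms(2)] using assms by (subst sum_single_nonzero[of i]) auto

lemma mat_vec_Ints:
  assumes "\<And>j. j \<in> {1..n} \<Longrightarrow> M i j \<in> \<int>" and "\<And>j. j \<in> {1..n} \<Longrightarrow> z j \<in> \<int>"
  shows "mat_vec n M z i \<in> \<int>"
  using assms by (auto simp: mat_vec_def intro!: Ints_sum Ints_mult)

lemma mat_mult_sparse_right:
  assumes "g \<in> {1..n}" and "\<And>j. j \<in> {1..n} \<Longrightarrow> N j k = (if j = g then d else 0)"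
  shows "mat_mult n M N i k = M i g * d"
  unfolding mat_mult_def using assms by (subst sum_single_nonzero[of g]) auto

lemma mat_mult_sparse_left:
  assumes "g \<in> {1..n}" and "\<And>j. j \<in> {1..n} \<Longrightarrow> M i j = (if j = g then d else 0)"
  shows "mat_mult n M N i k = d * N g k"
  unfolding mat_mult_def using assms by (subst sum_single_nonzero[of g]) auto

lemma lattice_image_eq_if_commute:
  assumes U_int: "\<And>i j. i \<in> {1..n} \<Longrightarrow> j \<in> {1..n} \<Longrightarrow> U i j \<in> \<int>"
    and V_int: "\<And>i j. i \<in> {1..n} \<Longrightarrow> j \<in> {1..n} \<Longrightarrow> V i j \<in> \<int>"
    and UV: "\<And>i k. i \<in> {1..n} \<Longrightarrow> k \<in> {1..n} \<Longrightarrow> mat_mult n U V i k = (if i = k then 1 else 0)"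
    and comm: "\<And>i k. i \<in> {1..n} \<Longrightarrow> k \<in> {1..n} \<Longrightarrow> mat_mult n U M i k = mat_mult n M U i k"
  shows "mat_vec n U ` lattice n M = lattice n M"
proof -
  have UM: "mat_vec n U (mat_vec n M z) = mat_vec n M (mat_vec n U z)" for z
    unfolding mat_vec_mat_mult by (rule mat_vec_cong) (simp_all add: comm)
  show ?thesis
  proof (intro equalityI subsetI)
    fix x assume "x \<in> mat_vec n U ` lattice n M"
    then obtain z where z: "\<forall>j\<in>{1..n}. z j \<in> \<int>" and x: "x = mat_vec n U (mat_vec n M z)"
      unfolding lattice_def by auto
    have "\<forall>j\<in>{1..n}. mat_vec n U z j \<in> \<int>"
      using z U_int by (auto intro: mat_vec_Ints)
    then show "x \<in> lattice n M"
      unfolding x UM lattice_def by blast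
  next
    fix x assume "x \<in> lattice n M"
    then obtain z where z: "\<forall>j\<in>{1..n}. z j \<in> \<int>" and x: "x = mat_vec n M z"
      unfolding lattice_def by auto
    have "mat_vec n (mat_mult n U V) z j = z j" if "j \<in> {1..n}" for j
      using that by (intro mat_vec_identity UV)
    then have "mat_vec n M z = mat_vec n M (mat_vec n (mat_mult n U V) z)"
      by (intro mat_vec_cong) simp_all
    then have "x = mat_vec n U (mat_vec n M (mat_vec n V z))"
      unfolding x UM by (simp add: mat_vec_mat_mult)
    moreover have "\<forall>j\<in>{1..n}. mat_vec n V z j \<in> \<int>"
      using z V_int by (auto intro: mat_vec_Ints)
    ultimately show "x \<in> mat_vec n U ` lattice n M"
      unfolding lattice_def by blast
  qed
qed

lemma signed_perm_matrix_transpose: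
  "signed_perm_matrix n S \<Longrightarrow> signed_perm_matrix n (\<lambda>i j. S j i)"
  unfolding signed_perm_matrix_def by simp

lemma signed_perm_matrix_Ints:
  assumes "signed_perm_matrix n S" and "i \<in> {1..n}" and "j \<in> {1..n}"
  shows "S i j \<in> \<int>"
proof -
  have "S i j \<in> {-1, 0, 1}"
    using assms unfolding signed_perm_matrix_def by blast
  then show ?thesis by auto
qed

lemma signed_perm_matrixE:
  assumes "signed_perm_matrix n S"
  obtains \<sigma> :: "nat \<Rightarrow> nat" and E :: "nat \<Rightarrow> real"
  where "\<And>k. k \<in> {1..n} \<Longrightarrow> \<sigma> k \<in> {1..n}" and "inj_on \<sigma> {1..n}"
    and "\<And>k. k \<in> {1..n} \<Longrightarrow> E k \<in> {-1, 1}"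
    and "\<And>i k. i \<in> {1..n} \<Longrightarrow> k \<in> {1..n} \<Longrightarrow> S i k = (if i = \<sigma> k then E k else 0)"
proof -
  have col: "\<exists>!i. i \<in> {1..n} \<and> S i k \<noteq> 0" if "k \<in> {1..n}" for k
    using assms that unfolding signed_perm_matrix_def by blast
  have row: "\<exists>!j. j \<in> {1..n} \<and> S i j \<noteq> 0" if "i \<in> {1..n}" for i
    using assms that unfolding signed_perm_matrix_def by blast
  define \<sigma> where "\<sigma> k = (THE i. i \<in> {1..n} \<and> S i k \<noteq> 0)" for k
  have \<sigma>: "\<sigma> k \<in> {1..n}" "S (\<sigma> k) k \<noteq> 0" if "k \<in> {1..n}" for k
    using theI'[OF col[OF that]] unfolding \<sigma>_def by simp_all
  have \<sigma>_unique: "i = \<sigma> k" if "i \<in> {1..n}" "k \<in> {1..n}" "S i k \<noteq> 0" for i k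
    unfolding \<sigma>_def by (rule sym, rule the1_equality[OF col[OF that(2)]]) (use that in simp)
  show thesis
  proof
    show "\<sigma> k \<in> {1..n}" if "k \<in> {1..n}" for k
      using \<sigma>[OF that] by simp
    show "inj_on \<sigma> {1..n}"
    proof (rule inj_onI)
      fix k k' assume k: "k \<in> {1..n}" "k' \<in> {1..n}" and eq: "\<sigma> k = \<sigma> k'"
      let ?j = "THE j. j \<in> {1..n} \<and> S (\<sigma> k) j \<noteq> 0"
      have "?j = k"
        by (rule the1_equality[OF row[OF \<sigma>(1)[OF k(1)]]]) (use \<sigma>(2)[OF k(1)] k in simp)
      moreover have "?j = k'"
        by (rule the1_equality[OF row[OF \<sigma>(1)[OF k(1)]]]) (use \<sigma>(2)[OF k(2)] eq k in simp)
      ultimately show "k = k'"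
        by simp
    qed
    show "S (\<sigma> k) k \<in> {-1, 1}" if "k \<in> {1..n}" for k
    proof -
      have "S (\<sigma> k) k \<in> {-1, 0, 1}"
        using \<sigma>(1)[OF that] assms that unfolding signed_perm_matrix_def by blast
      then show ?thesis
        using \<sigma>(2)[OF that] by simp
    qed
    show "S i k = (if i = \<sigma> k then S (\<sigma> k) k else 0)" if "i \<in> {1..n}" "k \<in> {1..n}" for i k
      using \<sigma>_unique[OF that] by auto
  qed
qed

lemma signed_perm_matrix_transpose_mult:
  assumes "signed_perm_matrix n S" and "i \<in> {1..n}" and "k \<in> {1..n}"
  shows "mat_mult n (\<lambda>i j. S j i) S i k = (if i = k then 1 else 0)"
proof -
  obtain \<sigma> E where \<sigma>: "\<And>k. k \<in> {1..n} \<Longrightarrow> \<sigma> k \<in> {1..n}" and inj: "inj_on \<sigma> {1..n}"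
    and E: "\<And>k. k \<in> {1..n} \<Longrightarrow> E k \<in> {-1, 1}"
    and S: "\<And>i k. i \<in> {1..n} \<Longrightarrow> k \<in> {1..n} \<Longrightarrow> S i k = (if i = \<sigma> k then E k else 0)"
    using signed_perm_matrixE[OF assms(1)] by blast
  have "mat_mult n (\<lambda>i j. S j i) S i k = E i * S (\<sigma> i) k"
    using assms by (intro mat_mult_sparse_left \<sigma>) (simp_all add: S)
  also have "\<dots> = (if i = k then 1 else 0)"
    using S[OF \<sigma>[OF assms(2)] assms(3)] E[OF assms(2)] inj_on_eq_iff[OF inj] assms(2,3) by auto
  finally show ?thesis .
qed

lemma signed_perm_matrix_mult_transpose:
  "signed_perm_matrix n S \<Longrightarrow> i \<in> {1..n} \<Longrightarrow> k \<in> {1..n} \<Longrightarrow>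
    mat_mult n S (\<lambda>i j. S j i) i k = (if i = k then 1 else 0)"
  using signed_perm_matrix_transpose_mult[OF signed_perm_matrix_transpose] by simp

definition cyc_succ :: "nat \<Rightarrow> nat \<Rightarrow> nat" where
  "cyc_succ n k = (if k < n then k + 1 else 1)"

definition twist :: "nat \<Rightarrow> nat \<Rightarrow> real" where
  "twist n k = (if k < n then 1 else -1)"

definition twisted_shift :: "nat \<Rightarrow> nat \<Rightarrow> nat \<Rightarrow> real" where
  "twisted_shift n i k = (if i = cyc_succ n k then twist n k else 0)"

lemma cyc_succ_in: "k \<in> {1..n} \<Longrightarrow> cyc_succ n k \<in> {1..n}"
  by (auto simp: cyc_succ_def)

lemma twist_in: "twist n k \<in> {-1, 1}"
  by (simp add: twist_def)

lemma matA_eq_twisted_shift: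
  "n \<ge> 2 \<Longrightarrow> i \<in> {1..n} \<Longrightarrow> k \<in> {1..n} \<Longrightarrow>
    matA n p q i k = q * (if i = k then 1 else 0) - p * twisted_shift n i k"
  by (auto simp: matA_def twisted_shift_def cyc_succ_def twist_def)

lemma twisted_shift_row:
  "i \<in> {1..n} \<Longrightarrow> j \<in> {1..n} \<Longrightarrow>
    twisted_shift n i j = (if i = 1 then (if j = n then -1 else 0) else (if j = i - 1 then 1 else 0))"
  by (auto simp: twisted_shift_def cyc_succ_def twist_def)

lemma mat_mult_twisted_shift_right:
  "k \<in> {1..n} \<Longrightarrow> mat_mult n M (twisted_shift n) i k = M i (cyc_succ n k) * twist n k"
  by (intro mat_mult_sparse_right cyc_succ_in) (simp_all add: twisted_shift_def)

lemma mat_mult_twisted_shift_left: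
  assumes "i \<in> {1..n}"
  shows "mat_mult n (twisted_shift n) M i k = (if i = 1 then - M n k else M (i - 1) k)"
proof (cases "i = 1")
  case True
  then have "mat_mult n (twisted_shift n) M i k = -1 * M n k"
    using assms by (intro mat_mult_sparse_left) (auto simp: twisted_shift_row)
  then show ?thesis using True by simp
next
  case False
  then have "mat_mult n (twisted_shift n) M i k = 1 * M (i - 1) k"
    using assms by (intro mat_mult_sparse_left) (auto simp: twisted_shift_row)
  then show ?thesis using False by simp
qed

lemma mat_mult_matA_right:
  assumes "n \<ge> 2" and "k \<in> {1..n}"
  shows "mat_mult n M (matA n p q) i k = q * M i k - p * mat_mult n M (twisted_shift n) i k"
proof -
  have "mat_mult n M (matA n p q) i k
      = q * (\<Sum>j=1..n. if j = k then M i j else 0) - p * mat_mult n M (twisted_shift n) i k"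
    unfolding mat_mult_def sum_distrib_left sum_subtractf[symmetric] using assms
    by (intro sum.cong) (auto simp: matA_eq_twisted_shift algebra_simps)
  then show ?thesis
    using assms(2) by simp
qed

lemma mat_mult_matA_left:
  assumes "n \<ge> 2" and "i \<in> {1..n}"
  shows "mat_mult n (matA n p q) M i k = q * M i k - p * mat_mult n (twisted_shift n) M i k"
proof -
  have "mat_mult n (matA n p q) M i k
      = q * (\<Sum>j=1..n. if i = j then M j k else 0) - p * mat_mult n (twisted_shift n) M i k"
    unfolding mat_mult_def sum_distrib_left sum_subtractf[symmetric] using assms
    by (intro sum.cong) (auto simp: matA_eq_twisted_shift algebra_simps)
  then show ?thesis
    using assms(2) by simp
qed

lemma commute_twisted_shift_iff:
  assumes "n \<ge> 1"
  shows "(\<forall>i\<in>{1..n}. \<forall>k\<in>{1..n}. mat_mult n S (twisted_shift n) i k = mat_mult n (twisted_shift n) S i k)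
   \<longleftrightarrow> (\<forall>i\<in>{1..<n}. \<forall>j\<in>{1..<n}. S i j = S (i+1) (j+1)) \<and>
       (\<forall>i\<in>{1..<n}. S i n = - S (i+1) 1) \<and>
       (\<forall>j\<in>{1..<n}. S n j = - S 1 (j+1)) \<and>
       S n n = S 1 1" (is "?L \<longleftrightarrow> ?R")
proof -
  define C where "C i k \<longleftrightarrow>
    (if k < n then S i (k + 1) else - S i 1) = (if i = 1 then - S n k else S (i - 1) k)" for i k
  have "?L \<longleftrightarrow> (\<forall>i\<in>{1..n}. \<forall>k\<in>{1..n}. C i k)"
    by (simp add: C_def mat_mult_twisted_shift_left mat_mult_twisted_shift_right cyc_succ_def twist_def)
  also have "\<dots> \<longleftrightarrow> ?R"
  proof
    assume C: "\<forall>i\<in>{1..n}. \<forall>k\<in>{1..n}. C i k"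
    have "S i j = S (i+1) (j+1)" if "i \<in> {1..<n}" "j \<in> {1..<n}" for i j
      using C[rule_format, of "i + 1" j] that unfolding C_def by auto
    moreover have "S i n = - S (i+1) 1" if "i \<in> {1..<n}" for i
      using C[rule_format, of "i + 1" n] that unfolding C_def by auto
    moreover have "S n j = - S 1 (j+1)" if "j \<in> {1..<n}" for j
      using C[rule_format, of 1 j] that unfolding C_def by auto
    moreover have "S n n = S 1 1"
      using C[rule_format, of 1 n] assms unfolding C_def by auto
    ultimately show ?R
      by blast
  next
    assume R: ?R
    show "\<forall>i\<in>{1..n}. \<forall>k\<in>{1..n}. C i k"
    proof (intro ballI)
      fix i k assume i: "i \<in> {1..n}" and k: "k \<in> {1..n}"
      show "C i k"
      proof (cases "i = 1")
        case True
        then show ?thesis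
          using R k unfolding C_def by (cases "k < n") auto
      next
        case False
        then have "i - 1 \<in> {1..<n}" and i_eq: "i = (i - 1) + 1"
          using i by auto
        then show ?thesis
          using R k unfolding C_def by (subst (1 2) i_eq) (cases "k < n", auto)
      qed
    qed
  qed
  finally show ?thesis .
qed

text \<open>Since T^n = -I, the inverse of q I - p T is (q^n + p^n)^(-1) \<Sum>d<n. q^(n-1-d) p^d T^d;
  the entry (j, i) comes from the power T^d with d = j - i mod n.\<close>

definition matA_inv :: "nat \<Rightarrow> real \<Rightarrow> real \<Rightarrow> nat \<Rightarrow> nat \<Rightarrow> real" where
  "matA_inv n p q j i =
     (if i \<le> j then q ^ (n - 1 - (j - i)) * p ^ (j - i) else - (q ^ (i - j - 1) * p ^ (n + j - i)))
     / (q ^ n + p ^ n)"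

lemma matA_inv_shift_column:
  assumes "1 \<le> k" and "k < n" and "j \<in> {1..n}" and "q ^ n + p ^ n \<noteq> 0"
  shows "q * matA_inv n p q j k - p * matA_inv n p q j (k + 1) = (if j = k then 1 else 0)"
proof -
  consider "k + 1 \<le> j" | "j = k" | "j < k"
    by linarith
  then show ?thesis
  proof cases
    case 1
    define d e where "d = j - (k + 1)" and "e = n - (d + 2)"
    have "j = k + 1 + d" and "n = d + 2 + e"
      using 1 assms unfolding d_def e_def by auto
    then show ?thesis
      by (simp add: matA_inv_def)
  next
    case 2
    obtain m where "n = Suc m"
      using assms by (cases n) auto
    then show ?thesis
      using 2 assms by (simp add: matA_inv_def add_divide_distrib[symmetric])
  next
    case 3
    define d e where "d = k - (j + 1)" and "e = n - (j + d + 2)"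
    have "k = j + 1 + d" and "n = j + d + 2 + e"
      using 3 assms unfolding d_def e_def by auto
    then show ?thesis
      by (simp add: matA_inv_def)
  qed
qed

lemma matA_inv_last_column:
  assumes "n \<ge> 2" and "j \<in> {1..n}" and "q ^ n + p ^ n \<noteq> 0"
  shows "q * matA_inv n p q j n + p * matA_inv n p q j 1 = (if j = n then 1 else 0)"
proof (cases "j = n")
  case True
  obtain m where "n = Suc m"
    using assms by (cases n) auto
  then show ?thesis
    using True assms by (simp add: matA_inv_def add_divide_distrib[symmetric])
next
  case False
  define e where "e = n - (j + 1)"
  obtain j' where "j = Suc j'"
    using assms by (cases j) auto
  moreover have "n = j + 1 + e"
    using False assms unfolding e_def by auto
  ultimately show ?thesis
    using False by (simp add: matA_inv_def)
qed

lemma matA_inv_mult_matA: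
  assumes "n \<ge> 2" and "q ^ n + p ^ n \<noteq> 0" and "j \<in> {1..n}" and "k \<in> {1..n}"
  shows "mat_mult n (matA_inv n p q) (matA n p q) j k = (if j = k then 1 else 0)"
proof -
  have "mat_mult n (matA_inv n p q) (matA n p q) j k
      = q * matA_inv n p q j k - p * matA_inv n p q j (cyc_succ n k) * twist n k"
    using assms by (simp add: mat_mult_matA_right mat_mult_twisted_shift_right)
  then show ?thesis
    using assms matA_inv_shift_column[of k n j q p] matA_inv_last_column[of n j q p]
    by (cases "k < n") (auto simp: cyc_succ_def twist_def)
qed

lemma matA_inv_mat_vec_matA:
  assumes "n \<ge> 2" and "q ^ n + p ^ n \<noteq> 0" and "j \<in> {1..n}"
  shows "mat_vec n (matA_inv n p q) (mat_vec n (matA n p q) z) j = z j"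
  unfolding mat_vec_mat_mult using assms by (intro mat_vec_identity matA_inv_mult_matA)

lemma Ints_abs_ge_1: "(y :: real) \<in> \<int> \<Longrightarrow> y \<noteq> 0 \<Longrightarrow> \<bar>y\<bar> \<ge> 1"
  by (auto elim!: Ints_cases)

lemma signed_power_quotient_Ints:
  fixes p q e e' :: real
  assumes pq: "0 < p" "p < q" and t: "1 \<le> t" "t \<le> n" and e: "e \<in> {-1, 1}" "e' \<in> {-1, 1}"
    and int: "(e * (q ^ t * p ^ (n - t)) + e' * p ^ n) / (q ^ n + p ^ n) \<in> \<int>"
  shows "t = n \<and> e' = e"
proof -
  define X where "X = q ^ t * p ^ (n - t)"
  have pn: "p ^ n = p ^ t * p ^ (n - t)" and qn: "q ^ n = q ^ t * q ^ (n - t)"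
    using t by (simp_all flip: power_add)
  have "p ^ t < q ^ t"
    using pq t by (intro power_strict_mono) auto
  then have PX: "p ^ n < X"
    unfolding pn X_def using pq by simp
  have Xq: "X < q ^ n" if "t < n"
  proof -
    have "p ^ (n - t) < q ^ (n - t)"
      using pq that by (intro power_strict_mono) auto
    then show ?thesis
      unfolding qn X_def using pq by simp
  qed
  have "X \<le> q ^ n"
    using Xq t(2) by (cases "t < n") (auto simp: X_def)
  have D: "q ^ n + p ^ n > 0"
    using pq by (simp add: add_pos_pos)
  have P: "p ^ n > 0"
    using pq by simp
  have "e * X + e' * p ^ n \<noteq> 0"
    using e PX P by auto
  then have "\<bar>(e * X + e' * p ^ n) / (q ^ n + p ^ n)\<bar> \<ge> 1"
    using int D by (intro Ints_abs_ge_1) (simp_all add: X_def)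
  then have big: "\<bar>e * X + e' * p ^ n\<bar> \<ge> q ^ n + p ^ n"
    using D by (simp add: abs_divide)
  have "e' = e"
  proof (rule ccontr)
    assume "e' \<noteq> e"
    then have "\<bar>e * X + e' * p ^ n\<bar> = X - p ^ n"
      using e PX by auto
    then show False
      using big \<open>X \<le> q ^ n\<close> P by simp
  qed
  moreover have "t = n"
  proof (rule ccontr)
    assume "t \<noteq> n"
    then have "\<bar>e * X + e' * p ^ n\<bar> < q ^ n + p ^ n"
      using e Xq t PX P by (auto simp: abs_if)
    then show False
      using big by simp
  qed
  ultimately show ?thesis
    by simp
qed

lemma cyc_succ_surj: "b \<in> {1..n} \<Longrightarrow> \<exists>r\<in>{1..n}. cyc_succ n r = b"
  by (rule bexI[of _ "if b = 1 then n else b - 1"]) (auto simp: cyc_succ_def)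

lemma matA_inv_cyc_succ:
  assumes "r \<in> {1..n}"
  shows "p * matA_inv n p q r (cyc_succ n r) = - twist n r * p ^ n / (q ^ n + p ^ n)"
proof -
  obtain m where "n = Suc m"
    using assms by (cases n) auto
  then show ?thesis
    using assms by (auto simp: matA_inv_def cyc_succ_def twist_def)
qed

lemma matA_inv_scaled:
  assumes "a \<in> {1..n}" and "r \<in> {1..n}"
  shows "q * matA_inv n p q r a =
    (if a \<le> r then q ^ (n - (r - a)) * p ^ (r - a) else - (q ^ (a - r) * p ^ (n - (a - r))))
    / (q ^ n + p ^ n)"
proof (cases "a \<le> r")
  case True
  obtain m where m: "n = Suc m"
    using assms by (cases n) auto
  have "r - a \<le> m"
    using assms m by auto
  then show ?thesis
    using True unfolding matA_inv_def m by (simp flip: power_Suc add: Suc_diff_le)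
next
  case False
  define d where "d = a - Suc r"
  have "a = r + Suc d"
    using False unfolding d_def by auto
  then show ?thesis
    using assms by (simp add: matA_inv_def)
qed

lemma lattice_matA_inv_Ints:
  assumes "n \<ge> 2" and "q ^ n + p ^ n \<noteq> 0" and "x \<in> lattice n (matA n p q)" and "j \<in> {1..n}"
  shows "mat_vec n (matA_inv n p q) x j \<in> \<int>"
proof -
  obtain z where "\<forall>j\<in>{1..n}. z j \<in> \<int>" and "x = mat_vec n (matA n p q) z"
    using assms(3) unfolding lattice_def by auto
  then show ?thesis
    using assms matA_inv_mat_vec_matA[of n q p j z] by simp
qed

lemma lattice_matA_signed_pair:
  assumes n: "n \<ge> 2" and pq: "0 < p" "p < q"
    and a: "a \<in> {1..n}" and b: "b \<in> {1..n}"
    and e: "e1 \<in> {-1, 1}" "e2 \<in> {-1, 1}"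
    and x: "x \<in> lattice n (matA n p q)"
    and x_eq: "\<And>i. i \<in> {1..n} \<Longrightarrow> x i = q * (if i = a then e1 else 0) - p * (if i = b then e2 else 0)"
  shows "b = cyc_succ n a \<and> e2 = twist n a * e1"
proof -
  define D where "D = q ^ n + p ^ n"
  have D: "D > 0"
    using pq unfolding D_def by (simp add: add_pos_pos)
  obtain r where r: "r \<in> {1..n}" "cyc_succ n r = b"
    using cyc_succ_surj[OF b] by blast
  have "mat_vec n (matA_inv n p q) x r
      = (\<Sum>i=1..n. q * e1 * (if i = a then matA_inv n p q r i else 0)
                   - p * e2 * (if i = b then matA_inv n p q r i else 0))"
    unfolding mat_vec_apply[OF r(1)] by (intro sum.cong) (simp_all add: x_eq algebra_simps)
  also have "\<dots> = e1 * (q * matA_inv n p q r a) - e2 * (p * matA_inv n p q r b)"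
    using a b by (simp add: sum_subtractf flip: sum_distrib_left)
  finally have int: "e1 * (q * matA_inv n p q r a) - e2 * (p * matA_inv n p q r b) \<in> \<int>"
    using lattice_matA_inv_Ints[OF n _ x r(1)] D unfolding D_def by simp
  define t where "t = (if a \<le> r then n - (r - a) else a - r)"
  define s :: real where "s = (if a \<le> r then 1 else -1)"
  have "n - (n - (r - a)) = r - a"
    using a r(1) by auto
  then have "q * matA_inv n p q r a = s * (q ^ t * p ^ (n - t)) / D"
    using matA_inv_scaled[OF a r(1), of q p] unfolding s_def t_def D_def by auto
  moreover have "p * matA_inv n p q r b = - twist n r * p ^ n / D"
    using matA_inv_cyc_succ[OF r(1)] r(2) unfolding D_def by simp
  ultimately have "(s * e1 * (q ^ t * p ^ (n - t)) + (twist n r * e2) * p ^ n) / D \<in> \<int>"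
    using int by (simp add: algebra_simps add_divide_distrib diff_divide_distrib)
  moreover have "1 \<le> t" "t \<le> n"
    using a r(1) unfolding t_def by auto
  moreover have "s * e1 \<in> {-1, 1}" "twist n r * e2 \<in> {-1, 1}"
    using e twist_in[of n r] unfolding s_def by auto
  ultimately have "t = n" and signs: "twist n r * e2 = s * e1"
    using signed_power_quotient_Ints[OF pq, of t n "s * e1" "twist n r * e2"] unfolding D_def by auto
  then have "r = a" and "s = 1"
    using a r(1) unfolding t_def s_def by (auto split: if_splits)
  then show ?thesis
    using r(2) signs twist_in[of n a] by auto
qed

lemma commute_twisted_shift_if_lattice_stable:
  assumes n: "n \<ge> 2" and pq: "0 < p" "p < q" and S: "signed_perm_matrix n S"
    and stable: "mat_vec n S ` lattice n (matA n p q) = lattice n (matA n p q)"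
    and i: "i \<in> {1..n}" and k: "k \<in> {1..n}"
  shows "mat_mult n S (twisted_shift n) i k = mat_mult n (twisted_shift n) S i k"
proof -
  obtain \<sigma> E where \<sigma>: "\<And>k. k \<in> {1..n} \<Longrightarrow> \<sigma> k \<in> {1..n}" and "inj_on \<sigma> {1..n}"
    and E: "\<And>k. k \<in> {1..n} \<Longrightarrow> E k \<in> {-1, 1}"
    and S_eq: "\<And>i k. i \<in> {1..n} \<Longrightarrow> k \<in> {1..n} \<Longrightarrow> S i k = (if i = \<sigma> k then E k else 0)"
    using signed_perm_matrixE[OF S] by blast
  define k' where "k' = cyc_succ n k"
  have k': "k' \<in> {1..n}"
    using k cyc_succ_in unfolding k'_def by auto
  have ST: "mat_mult n S (twisted_shift n) i' k = (if i' = \<sigma> k' then E k' * twist n k else 0)"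
    if "i' \<in> {1..n}" for i'
    using that k k' by (simp add: mat_mult_twisted_shift_right S_eq k'_def)
  have TS: "mat_mult n (twisted_shift n) S i k = (if i = cyc_succ n (\<sigma> k) then twist n (\<sigma> k) * E k else 0)"
    using k by (subst mat_mult_sparse_right[OF \<sigma>[OF k], of _ _ "E k"]) (simp_all add: S_eq twisted_shift_def)
  define x where "x = mat_vec n S (mat_vec n (matA n p q) (\<lambda>j. if j = k then 1 else 0))"
  have "mat_vec n (matA n p q) (\<lambda>j. if j = k then 1 else 0) \<in> lattice n (matA n p q)"
    unfolding lattice_def by (intro CollectI exI[of _ "\<lambda>j. if j = k then 1 else 0"]) auto
  then have "x \<in> lattice n (matA n p q)"
    unfolding x_def by (subst stable[symmetric]) (rule imageI)
  moreover have "x i' = q * (if i' = \<sigma> k then E k else 0) - p * (if i' = \<sigma> k' then E k' * twist n k else 0)"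
    if "i' \<in> {1..n}" for i'
    unfolding x_def mat_vec_mat_mult using that k n
    by (simp add: mat_vec_unit mat_mult_matA_right ST S_eq)
  moreover have "E k' * twist n k \<in> {-1, 1}"
    using E[OF k'] twist_in[of n k] by auto
  ultimately have "\<sigma> k' = cyc_succ n (\<sigma> k) \<and> E k' * twist n k = twist n (\<sigma> k) * E k"
    using lattice_matA_signed_pair[OF n pq \<sigma>[OF k] \<sigma>[OF k'] E[OF k]] by blast
  then show ?thesis
    using ST[OF i] TS by simp
qed

lemma lattice_stable_if_commute_twisted_shift:
  assumes n: "n \<ge> 2" and S: "signed_perm_matrix n S"
    and comm: "\<And>i k. i \<in> {1..n} \<Longrightarrow> k \<in> {1..n} \<Longrightarrow>
      mat_mult n S (twisted_shift n) i k = mat_mult n (twisted_shift n) S i k"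
  shows "mat_vec n S ` lattice n (matA n p q) = lattice n (matA n p q)"
proof (rule lattice_image_eq_if_commute[where V = "\<lambda>i j. S j i"])
  show "mat_mult n S (matA n p q) i k = mat_mult n (matA n p q) S i k"
    if "i \<in> {1..n}" "k \<in> {1..n}" for i k
    using that n by (simp add: mat_mult_matA_right mat_mult_matA_left comm)
qed (simp_all add: signed_perm_matrix_Ints[OF S] signed_perm_matrix_mult_transpose[OF S])

theorem theorem3:
  fixes n :: nat and p q :: real and S :: "nat \<Rightarrow> nat \<Rightarrow> real"
  assumes "n \<ge> 2" and "0 < p" and "p < q"
    and "signed_perm_matrix n S"
  shows "mat_vec n S ` lattice n (matA n p q) = lattice n (matA n p q) \<longleftrightarrow>
         (\<forall>i\<in>{1..<n}. \<forall>j\<in>{1..<n}. S i j = S (i+1) (j+1)) \<and>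
         (\<forall>i\<in>{1..<n}. S i n = - S (i+1) 1) \<and>
         (\<forall>j\<in>{1..<n}. S n j = - S 1 (j+1)) \<and>
         S n n = S 1 1"
proof -
  have "mat_vec n S ` lattice n (matA n p q) = lattice n (matA n p q) \<longleftrightarrow>
      (\<forall>i\<in>{1..n}. \<forall>k\<in>{1..n}. mat_mult n S (twisted_shift n) i k = mat_mult n (twisted_shift n) S i k)"
    using commute_twisted_shift_if_lattice_stable[OF assms]
      lattice_stable_if_commute_twisted_shift[OF assms(1,4), of p q]
    by (intro iffI) blast+
  also have "\<dots> \<longleftrightarrow> (\<forall>i\<in>{1..<n}. \<forall>j\<in>{1..<n}. S i j = S (i+1) (j+1)) \<and>
         (\<forall>i\<in>{1..<n}. S i n = - S (i+1) 1) \<and>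
         (\<forall>j\<in>{1..<n}. S n j = - S 1 (j+1)) \<and>
         S n n = S 1 1"
    using assms(1) by (intro commute_twisted_shift_iff) simp
  finally show ?thesis .
qed

end
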